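(* Let $L$ be a frame and $X_L$ its Priestley space with Stone map $\varphi$. (1) For $a\in L$, we have $a=\bigvee\{b\in K(L)\mid b\le a\}$ if and only if $\mathrm{core}\,\varphi(a)$ is dense in $\varphi(a)$. (2) $L$ is an algebraic frame if and only if $X_L$ is an algebraic L-space.
   Context: A frame is a complete lattice satisfying $a\wedge\bigvee S=\bigvee\{a\wedge s\mid s\in S\}$. In a frame $L$, $a\ll b$ means: whenever $b\le\bigvee S$ there is a finite $T\subseteq S$ with $a\le\bigvee T$; $a$ is compact if $a\ll a$, and $K(L)$ is the set of compact elements. $L$ is an algebraic frame if every $a\in L$ satisfies $a=\bigvee\{b\in K(L)\mid b\le a\}$. A Priestley space is a Stone space $X$ with a partial order such that clopen upsets separate points (if $x\not\le y$ there is a clopen upset containing $x$ but not $y$). An L-space is a Priestley space in which the downset of each clopen set is clopen and the closure of each open upset is open. ${\sf ClopUp}(X)$ denotes the set of clopen upsets of $X$. The Priestley space $X_L$ of a frame $L$ is the set of prime filters of $L$ ordered by inclusion, topologized by the subbasis $\{\varphi(a)\}\cup\{X_L\setminus\varphi(a)\}$ ($a\in L$), where $\varphi(a)=\{x\in X_L\mid a\in x\}$; it is an L-space. For an L-space $X$, its spatial part is $Y=\{y\in X\mid {\downarrow}y \text{ is clopen}\}$. A Scott upset of $X$ is a closed upset $F$ with $\min F\subseteq Y$; ${\sf ClopSUp}(X)$ is the set of clopen Scott upsets. For $U\in{\sf ClopUp}(X)$, $\mathrm{core}\,U=\bigcup\{V\in{\sf ClopSUp}(X)\mid V\subseteq U\}$.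 $X$ is an algebraic L-space if $\mathrm{core}\,U$ is dense in $U$ for every $U\in{\sf ClopUp}(X)$. *)

theory Defs
  imports "HOL-Analysis.Analysis"
begin

definition is_frame :: "'a::complete_lattice itself \<Rightarrow> bool" where
  "is_frame _ \<longleftrightarrow> (\<forall>(a::'a) S. inf a (Sup S) = Sup ((\<lambda>s. inf a s) ` S))"

definition way_below :: "'a::complete_lattice \<Rightarrow> 'a \<Rightarrow> bool" where
  "way_below a b \<longleftrightarrow> (\<forall>S. b \<le> Sup S \<longrightarrow> (\<exists>T. T \<subseteq> S \<and> finite T \<and> a \<le> Sup T))"

definition compact_el :: "'a::complete_lattice \<Rightarrow> bool" where
  "compact_el a \<longleftrightarrow> way_below a a"

definition K_el :: "'a::complete_lattice itself \<Rightarrow> 'a set" where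
  "K_el _ = {a. compact_el a}"

definition algebraic_frame :: "'a::complete_lattice itself \<Rightarrow> bool" where
  "algebraic_frame t \<longleftrightarrow> is_frame t \<and> (\<forall>a::'a. a = Sup {b \<in> K_el t. b \<le> a})"

definition prime_filter :: "'a::complete_lattice set \<Rightarrow> bool" where
  "prime_filter F \<longleftrightarrow>
     top \<in> F \<and> bot \<notin> F \<and>
     (\<forall>a b. a \<in> F \<and> a \<le> b \<longrightarrow> b \<in> F) \<and>
     (\<forall>a b. a \<in> F \<and> b \<in> F \<longrightarrow> inf a b \<in> F) \<and>
     (\<forall>a b. sup a b \<in> F \<longrightarrow> a \<in> F \<or> b \<in> F)"

definition XL_points :: "'a::complete_lattice itself \<Rightarrow> 'a set set" where
  "XL_points _ = {x. prime_filter x}"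

definition stone_map :: "'a::complete_lattice \<Rightarrow> 'a set set" where
  "stone_map a = {x. prime_filter x \<and> a \<in> x}"

text \<open>We generate on the whole type and take the subspace topology, which gives
  exactly the topology generated by the traces.\<close>
definition XL_topology :: "'a::complete_lattice itself \<Rightarrow> 'a set topology" where
  "XL_topology t = subtopology
     (topology_generated_by (range (\<lambda>a::'a. {x. a \<in> x}) \<union> range (\<lambda>a::'a. {x. a \<notin> x})))
     (XL_points t)"

definition clopenin :: "'b topology \<Rightarrow> 'b set \<Rightarrow> bool" where
  "clopenin T U \<longleftrightarrow> closedin T U \<and> openin T U"

definition is_upset :: "'b topology \<Rightarrow> ('b \<Rightarrow> 'b \<Rightarrow> bool) \<Rightarrow> 'b set \<Rightarrow> bool" where
  "is_upset T le U \<longleftrightarrow> U \<subseteq> topspace T \<and> (\<forall>x\<in>U. \<forall>y\<in>topspace T. le x y \<longrightarrow> y \<in> U)"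

definition down_set :: "'b topology \<Rightarrow> ('b \<Rightarrow> 'b \<Rightarrow> bool) \<Rightarrow> 'b set \<Rightarrow> 'b set" where
  "down_set T le S = {x \<in> topspace T. \<exists>s\<in>S. le x s}"

definition partial_order_on_space :: "'b topology \<Rightarrow> ('b \<Rightarrow> 'b \<Rightarrow> bool) \<Rightarrow> bool" where
  "partial_order_on_space T le \<longleftrightarrow>
     (\<forall>x\<in>topspace T. le x x) \<and>
     (\<forall>x\<in>topspace T. \<forall>y\<in>topspace T. le x y \<and> le y x \<longrightarrow> x = y) \<and>
     (\<forall>x\<in>topspace T. \<forall>y\<in>topspace T. \<forall>z\<in>topspace T. le x y \<and> le y z \<longrightarrow> le x z)"

definition stone_space :: "'b topology \<Rightarrow> bool" where
  "stone_space T \<longleftrightarrow> compact_space T \<and> Hausdorff_space T \<and>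
     (\<forall>U x. openin T U \<and> x \<in> U \<longrightarrow> (\<exists>V. clopenin T V \<and> x \<in> V \<and> V \<subseteq> U))"

definition priestley_space :: "'b topology \<Rightarrow> ('b \<Rightarrow> 'b \<Rightarrow> bool) \<Rightarrow> bool" where
  "priestley_space T le \<longleftrightarrow> stone_space T \<and> partial_order_on_space T le \<and>
     (\<forall>x\<in>topspace T. \<forall>y\<in>topspace T. \<not> le x y \<longrightarrow>
        (\<exists>U. clopenin T U \<and> is_upset T le U \<and> x \<in> U \<and> y \<notin> U))"

definition L_space :: "'b topology \<Rightarrow> ('b \<Rightarrow> 'b \<Rightarrow> bool) \<Rightarrow> bool" where
  "L_space T le \<longleftrightarrow> priestley_space T le \<and>
     (\<forall>U. clopenin T U \<longrightarrow> clopenin T (down_set T le U)) \<and>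
     (\<forall>U. openin T U \<and> is_upset T le U \<longrightarrow> openin T (T closure_of U))"

definition ClopUp :: "'b topology \<Rightarrow> ('b \<Rightarrow> 'b \<Rightarrow> bool) \<Rightarrow> 'b set set" where
  "ClopUp T le = {U. clopenin T U \<and> is_upset T le U}"

definition spatial_part :: "'b topology \<Rightarrow> ('b \<Rightarrow> 'b \<Rightarrow> bool) \<Rightarrow> 'b set" where
  "spatial_part T le = {y \<in> topspace T. clopenin T (down_set T le {y})}"

definition min_set :: "('b \<Rightarrow> 'b \<Rightarrow> bool) \<Rightarrow> 'b set \<Rightarrow> 'b set" where
  "min_set le F = {x \<in> F. \<forall>y\<in>F. le y x \<longrightarrow> y = x}"

definition scott_upset :: "'b topology \<Rightarrow> ('b \<Rightarrow> 'b \<Rightarrow> bool) \<Rightarrow> 'b set \<Rightarrow> bool" where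
  "scott_upset T le F \<longleftrightarrow> closedin T F \<and> is_upset T le F \<and> min_set le F \<subseteq> spatial_part T le"

definition ClopSUp :: "'b topology \<Rightarrow> ('b \<Rightarrow> 'b \<Rightarrow> bool) \<Rightarrow> 'b set set" where
  "ClopSUp T le = {V. clopenin T V \<and> scott_upset T le V}"

definition core :: "'b topology \<Rightarrow> ('b \<Rightarrow> 'b \<Rightarrow> bool) \<Rightarrow> 'b set \<Rightarrow> 'b set" where
  "core T le U = \<Union>{V \<in> ClopSUp T le. V \<subseteq> U}"

definition dense_in_set :: "'b topology \<Rightarrow> 'b set \<Rightarrow> 'b set \<Rightarrow> bool" where
  "dense_in_set T A U \<longleftrightarrow> A \<subseteq> U \<and> U \<subseteq> T closure_of A"

definition algebraic_L_space :: "'b topology \<Rightarrow> ('b \<Rightarrow> 'b \<Rightarrow> bool) \<Rightarrow> bool" where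
  "algebraic_L_space T le \<longleftrightarrow> L_space T le \<and>
     (\<forall>U\<in>ClopUp T le. dense_in_set T (core T le U) U)"

end

theory Submission
  imports Defs
begin

(*
  By the prime filter theorem the Stone map \<phi> is an order embedding of L into the clopen
  upsets of the compact space X_L, and every clopen upset is some \<phi>(a). In a frame, moreover,
  the closure of \<Union>{\<phi>(s) | s \<in> S} is \<phi>(\<Squnion>S). The clopen upset \<phi>(k) is a Scott upset exactly
  when k is compact. The spatial points are the prime filters L - \<down>p with p prime; compactness
  of k turns a minimal point x of \<phi>(k) into one, since an element p maximal among those above
  \<Squnion>(L - x) and not above k is prime and L - \<down>p = x by minimality. Conversely, if \<phi>(k) is
  Scott and k \<le> \<Squnion>S, a prime filter containing k and missing S would lie above a minimal
  point L - \<down>p of \<phi>(k) with \<Squnion>S \<le> p, which is absurd; so by the prime filter theorem k is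
  below the join of finitely many elements of S. Hence core \<phi>(a) is \<Union>{\<phi>(k) | k \<in> K(L), k \<le> a},
  whose closure is \<phi>(\<Squnion>{k \<in> K(L) | k \<le> a}), which gives (1).
  For (2) it remains to see that X_L is an L-space; the downset of a basic clopen
  \<phi>(b) - \<phi>(c) is the complement of \<phi>(b \<rightarrow> c), with \<rightarrow> the Heyting implication of L.
*)

section \<open>Prime filters and the Stone map\<close>

lemma prime_filter_top: "prime_filter x \<Longrightarrow> top \<in> x"
  unfolding prime_filter_def by blast

lemma prime_filter_bot: "prime_filter x \<Longrightarrow> bot \<notin> x"
  unfolding prime_filter_def by blast

lemma prime_filter_upward: "prime_filter x \<Longrightarrow> a \<in> x \<Longrightarrow> a \<le> b \<Longrightarrow> b \<in> x"
  unfolding prime_filter_def by blast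

lemma prime_filter_inf_iff: "prime_filter x \<Longrightarrow> inf a b \<in> x \<longleftrightarrow> a \<in> x \<and> b \<in> x"
  unfolding prime_filter_def by (meson inf_le1 inf_le2)

lemma prime_filter_sup_iff: "prime_filter x \<Longrightarrow> sup a b \<in> x \<longleftrightarrow> a \<in> x \<or> b \<in> x"
  unfolding prime_filter_def by (meson sup_ge1 sup_ge2)

lemma prime_filter_Inf_finite_iff:
  assumes "prime_filter x" "finite A"
  shows "Inf A \<in> x \<longleftrightarrow> A \<subseteq> x"
  using assms(2)
  by (induction A rule: finite_induct)
     (simp_all add: prime_filter_top prime_filter_inf_iff assms(1))

lemma prime_filter_Sup_finite_iff:
  assumes "prime_filter x" "finite A"
  shows "Sup A \<in> x \<longleftrightarrow> (\<exists>a\<in>A. a \<in> x)"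
  using assms(2)
  by (induction A rule: finite_induct)
     (simp_all add: prime_filter_bot prime_filter_sup_iff assms(1))

lemma prime_filter_Inter_chain:
  assumes "C \<noteq> {}" "\<And>y. y \<in> C \<Longrightarrow> prime_filter y"
    and chain: "\<And>y z. y \<in> C \<Longrightarrow> z \<in> C \<Longrightarrow> y \<subseteq> z \<or> z \<subseteq> y"
  shows "prime_filter (\<Inter>C)"
  unfolding prime_filter_def
proof (intro conjI allI impI)
  fix a b assume ab: "sup a b \<in> \<Inter>C"
  show "a \<in> \<Inter>C \<or> b \<in> \<Inter>C"
  proof (rule ccontr)
    assume "\<not> ?thesis"
    then obtain y z where "y \<in> C" "a \<notin> y" "z \<in> C" "b \<notin> z"
      by blast
    with chain[of y z] ab assms(2) show False
      by (auto simp: prime_filter_sup_iff)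
  qed
qed (use assms in \<open>auto simp: prime_filter_top prime_filter_bot prime_filter_inf_iff
                   intro: prime_filter_upward\<close>)

lemma mem_stone_map [simp]: "x \<in> stone_map a \<longleftrightarrow> prime_filter x \<and> a \<in> x"
  unfolding stone_map_def by simp

lemma stone_map_top [simp]: "stone_map top = {x. prime_filter x}"
  by (auto simp: prime_filter_top)

lemma stone_map_bot [simp]: "stone_map bot = {}"
  by (auto simp: prime_filter_bot)

lemma ex_min_set_stone_map_below:
  assumes "prime_filter x" "k \<in> x"
  obtains m where "m \<in> min_set (\<subseteq>) (stone_map k)" "m \<subseteq> x"
proof -
  define A where "A = {y \<in> stone_map k. y \<subseteq> x}"
  have "partial_order_on A (relation_of (\<lambda>y z. z \<subseteq> y) A)"
    by (rule partial_order_on_relation_ofI) auto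
  then have "\<exists>m\<in>A. \<forall>y\<in>A. y \<subseteq> m \<longrightarrow> y = m"
  proof (rule predicate_Zorn)
    fix C assume "C \<in> Chains (relation_of (\<lambda>y z. z \<subseteq> y) A)"
    then have CA: "C \<subseteq> A" and chain: "\<And>y z. y \<in> C \<Longrightarrow> z \<in> C \<Longrightarrow> y \<subseteq> z \<or> z \<subseteq> y"
      unfolding Chains_def relation_of_def by blast+
    show "\<exists>u\<in>A. \<forall>y\<in>C. u \<subseteq> y"
    proof (cases "C = {}")
      case True
      have "x \<in> A"
        using assms unfolding A_def by simp
      with True show ?thesis
        by blast
    next
      case False
      have "prime_filter (\<Inter>C)"
        using False CA chain unfolding A_def by (intro prime_filter_Inter_chain) auto
      then have "\<Inter>C \<in> A"
        using CA False unfolding A_def by auto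
      then show ?thesis
        by blast
    qed
  qed
  then obtain m where m: "m \<in> A" and min: "\<And>y. y \<in> A \<Longrightarrow> y \<subseteq> m \<Longrightarrow> y = m"
    by blast
  moreover have "y = m" if "y \<in> stone_map k" "y \<subseteq> m" for y
    using that m min unfolding A_def by blast
  ultimately have "m \<in> min_set (\<subseteq>) (stone_map k)" "m \<subseteq> x"
    unfolding A_def min_set_def by blast+
  then show ?thesis
    by (rule that)
qed

section \<open>The Priestley topology on prime filters\<close>

lemma topspace_XL_topology [simp]: "topspace (XL_topology t) = {x. prime_filter x}"
proof -
  have "\<Union>(range (\<lambda>a::'a. {x. a \<in> x}) \<union> range (\<lambda>a::'a. {x. a \<notin> x})) = UNIV"
    by blast
  then show ?thesis
    unfolding XL_topology_def XL_points_def by simp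
qed

lemma generate_topology_on_prime_filter_basic_nbhd:
  assumes "generate_topology_on (range (\<lambda>a::'a::complete_lattice. {x. a \<in> x}) \<union> range (\<lambda>a. {x. a \<notin> x})) U"
    and "x \<in> U" "prime_filter x"
  shows "\<exists>b c. x \<in> stone_map b - stone_map c \<and> stone_map b - stone_map c \<subseteq> U"
  using assms
proof (induction arbitrary: x rule: generate_topology_on.induct)
  case (Int U V)
  then obtain b c b' c' where
    "x \<in> stone_map b - stone_map c" "stone_map b - stone_map c \<subseteq> U"
    "x \<in> stone_map b' - stone_map c'" "stone_map b' - stone_map c' \<subseteq> V"
    by (meson IntE)
  moreover have "stone_map (inf b b') - stone_map (sup c c')
                 = (stone_map b - stone_map c) \<inter> (stone_map b' - stone_map c')"
    by (auto simp: prime_filter_inf_iff prime_filter_sup_iff)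
  ultimately have "x \<in> stone_map (inf b b') - stone_map (sup c c')"
    "stone_map (inf b b') - stone_map (sup c c') \<subseteq> U \<inter> V"
    by blast+
  then show ?case
    by blast
next
  case (Basis s)
  then consider a where "s = {x. a \<in> x}" | a where "s = {x. a \<notin> x}"
    by blast
  then show ?case
  proof cases
    case (1 a)
    with Basis have "x \<in> stone_map a - stone_map bot" "stone_map a - stone_map bot \<subseteq> s"
      by auto
    then show ?thesis
      by blast
  next
    case (2 a)
    with Basis have "x \<in> stone_map top - stone_map a" "stone_map top - stone_map a \<subseteq> s"
      by auto
    then show ?thesis
      by blast
  qed
qed blast+

lemma openin_XL_topology_iff:
  "openin (XL_topology t) U \<longleftrightarrow> U \<subseteq> {x. prime_filter x} \<and>
     (\<forall>x\<in>U. \<exists>b c. x \<in> stone_map b - stone_map c \<and> stone_map b - stone_map (c::'a::complete_lattice) \<subseteq> U)"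
    (is "_ \<longleftrightarrow> _ \<and> ?basic U")
proof
  let ?S = "range (\<lambda>a::'a. {x. a \<in> x}) \<union> range (\<lambda>a. {x. a \<notin> x})"
  assume "openin (XL_topology t) U"
  then obtain V where V: "generate_topology_on ?S V" and U: "U = V \<inter> {x. prime_filter x}"
    unfolding XL_topology_def XL_points_def openin_subtopology openin_topology_generated_by_iff
    by auto
  have "?basic U"
  proof
    fix x assume "x \<in> U"
    then have "x \<in> V" "prime_filter x"
      using U by auto
    then obtain b c where "x \<in> stone_map b - stone_map c" "stone_map b - stone_map c \<subseteq> V"
      using generate_topology_on_prime_filter_basic_nbhd[OF V] by blast
    moreover have "stone_map b - stone_map c \<subseteq> {x. prime_filter x}"
      by auto
    ultimately show "\<exists>b c. x \<in> stone_map b - stone_map c \<and> stone_map b - stone_map c \<subseteq> U"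
      using U by blast
  qed
  then show "U \<subseteq> {x. prime_filter x} \<and> ?basic U"
    using U by blast
next
  let ?S = "range (\<lambda>a::'a. {x. a \<in> x}) \<union> range (\<lambda>a. {x. a \<notin> x})"
  have "openin (XL_topology t) (stone_map b - stone_map c)" for b c :: 'a
  proof -
    have "generate_topology_on ?S ({x. b \<in> x} \<inter> {x. c \<notin> x})"
      by (intro generate_topology_on.Int generate_topology_on.Basis) auto
    moreover have "stone_map b - stone_map c = ({x. b \<in> x} \<inter> {x. c \<notin> x}) \<inter> XL_points t"
      by (auto simp: XL_points_def)
    ultimately show ?thesis
      unfolding XL_topology_def openin_subtopology openin_topology_generated_by_iff by blast
  qed
  moreover assume "U \<subseteq> {x. prime_filter x} \<and> ?basic U"
  ultimately show "openin (XL_topology t) U"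
    by (subst openin_subopen) blast
qed

lemma openin_stone_map_diff: "openin (XL_topology t) (stone_map b - stone_map (c::'a::complete_lattice))"
proof -
  have "stone_map b - stone_map c \<subseteq> {x. prime_filter x}"
    by auto
  then show ?thesis
    unfolding openin_XL_topology_iff by blast
qed

lemma clopenin_stone_map_diff: "clopenin (XL_topology t) (stone_map b - stone_map (c::'a::complete_lattice))"
proof -
  have "openin (XL_topology t) (stone_map a)" "openin (XL_topology t) ({x. prime_filter x} - stone_map a)"
    for a :: 'a
    using openin_stone_map_diff[of t a bot] openin_stone_map_diff[of t top a] by simp_all
  then have "closedin (XL_topology t) (stone_map b)" "openin (XL_topology t) (stone_map c)"
    unfolding closedin_def by auto
  then show ?thesis
    unfolding clopenin_def by (simp add: closedin_diff openin_stone_map_diff)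
qed

lemma clopenin_stone_map: "clopenin (XL_topology t) (stone_map (a::'a::complete_lattice))"
  using clopenin_stone_map_diff[of t a bot] by simp

lemma clopenin_compl_stone_map:
  "clopenin (XL_topology t) ({x. prime_filter x} - stone_map (a::'a::complete_lattice))"
  using clopenin_stone_map_diff[of t top a] by simp

lemma is_upset_stone_map: "is_upset (XL_topology t) (\<subseteq>) (stone_map (a::'a::complete_lattice))"
  unfolding is_upset_def by auto

lemma down_set_singleton_XL_topology:
  "down_set (XL_topology t) (\<subseteq>) {y} = {z. prime_filter z \<and> z \<subseteq> (y::'a::complete_lattice set)}"
  unfolding down_set_def by auto

lemma Hausdorff_space_XL_topology: "Hausdorff_space (XL_topology (t::'a::complete_lattice itself))"
  unfolding Hausdorff_space_def
proof (intro allI impI)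
  fix x y :: "'a set"
  assume "x \<in> topspace (XL_topology t) \<and> y \<in> topspace (XL_topology t) \<and> x \<noteq> y"
  then obtain a where "prime_filter x" "prime_filter y" "a \<in> x \<and> a \<notin> y \<or> a \<in> y \<and> a \<notin> x"
    by auto
  then have "x \<in> stone_map a \<and> y \<in> {x. prime_filter x} - stone_map a \<or>
             x \<in> {x. prime_filter x} - stone_map a \<and> y \<in> stone_map a"
    by auto
  moreover have "openin (XL_topology t) (stone_map a)" "openin (XL_topology t) ({x. prime_filter x} - stone_map a)"
    using clopenin_stone_map[of t a] clopenin_compl_stone_map[of t a] unfolding clopenin_def by auto
  moreover have "disjnt (stone_map a) ({x. prime_filter x} - stone_map a)"
    by (auto simp: disjnt_def)
  ultimately show "\<exists>U V. openin (XL_topology t) U \<and> openin (XL_topology t) V \<and> x \<in> U \<and> y \<in> V \<and> disjnt U V"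
    using disjnt_sym by blast
qed

lemma XL_topology_eq_subbase:
  "XL_topology t = topology (arbitrary union_of
     (finite intersection_of (\<lambda>S. S \<in> range stone_map \<union> range (\<lambda>a. {x. prime_filter x} - stone_map a))
      relative_to {x. prime_filter x}))"
    (is "_ = topology (arbitrary union_of (finite intersection_of (\<lambda>S. S \<in> ?B) relative_to ?P))")
proof (unfold topology_eq, intro allI iffI)
  fix U :: "'a::complete_lattice set set"
  have basic: "(finite intersection_of (\<lambda>S. S \<in> ?B) relative_to ?P) (stone_map b - stone_map c)" for b c :: 'a
  proof -
    have "(finite intersection_of (\<lambda>S. S \<in> ?B)) (stone_map b \<inter> (?P - stone_map c))"
      by (intro finite_intersection_of_Int finite_intersection_of_inc) auto
    moreover have "?P \<inter> (stone_map b \<inter> (?P - stone_map c)) = stone_map b - stone_map c"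
      by auto
    ultimately show ?thesis
      unfolding relative_to_def by metis
  qed
  assume "openin (XL_topology t) U"
  then show "openin (topology (arbitrary union_of (finite intersection_of (\<lambda>S. S \<in> ?B) relative_to ?P))) U"
    unfolding openin_subbase arbitrary_union_of_alt openin_XL_topology_iff using basic by blast
next
  fix U :: "'a::complete_lattice set set"
  assume "openin (topology (arbitrary union_of (finite intersection_of (\<lambda>S. S \<in> ?B) relative_to ?P))) U"
  moreover have "openin (XL_topology t) S" if "S \<in> ?B" for S
    using that clopenin_stone_map clopenin_compl_stone_map unfolding clopenin_def by blast
  ultimately show "openin (XL_topology t) U"
    using minimal_topology_subbase[of "\<lambda>S. S \<in> ?B" "XL_topology t" ?P U]
    by (metis openin_topspace topspace_XL_topology)
qed

lemma compactin_finite_subcover_image: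
  assumes "compactin X S" "S \<subseteq> (\<Union>i\<in>I. f i)" "\<And>i. i \<in> I \<Longrightarrow> openin X (f i)"
  obtains J where "finite J" "J \<subseteq> I" "S \<subseteq> (\<Union>i\<in>J. f i)"
proof -
  obtain \<F> where "finite \<F>" "\<F> \<subseteq> f ` I" "S \<subseteq> \<Union>\<F>"
    using compactinD[OF assms(1), of "f ` I"] assms(2,3) by blast
  then show ?thesis
    using that by (metis finite_subset_image)
qed

section \<open>Filters, ideals and compact elements\<close>

definition lattice_filter :: "'a::complete_lattice set \<Rightarrow> bool" where
  "lattice_filter F \<longleftrightarrow> top \<in> F \<and> (\<forall>a b. a \<in> F \<and> a \<le> b \<longrightarrow> b \<in> F) \<and> (\<forall>a b. a \<in> F \<and> b \<in> F \<longrightarrow> inf a b \<in> F)"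

definition lattice_ideal :: "'a::complete_lattice set \<Rightarrow> bool" where
  "lattice_ideal I \<longleftrightarrow> bot \<in> I \<and> (\<forall>a b. b \<in> I \<and> a \<le> b \<longrightarrow> a \<in> I) \<and> (\<forall>a b. a \<in> I \<and> b \<in> I \<longrightarrow> sup a b \<in> I)"

lemma lattice_filter_generated: "lattice_filter {y. \<exists>C0. finite C0 \<and> C0 \<subseteq> C \<and> Inf C0 \<le> y}"
  (is "lattice_filter ?F")
  unfolding lattice_filter_def
proof (intro conjI allI impI)
  fix a b assume "a \<in> ?F \<and> b \<in> ?F"
  then obtain C1 C2 where "finite C1" "C1 \<subseteq> C" "Inf C1 \<le> a" "finite C2" "C2 \<subseteq> C" "Inf C2 \<le> b"
    by blast
  then show "inf a b \<in> ?F"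
    by (intro CollectI exI[of _ "C1 \<union> C2"]) (auto simp: Inf_union_distrib intro: le_infI1 le_infI2)
qed (auto intro: order.trans exI[of _ "{}"])

lemma lattice_ideal_generated: "lattice_ideal {y. \<exists>A0. finite A0 \<and> A0 \<subseteq> A \<and> y \<le> Sup A0}"
  (is "lattice_ideal ?I")
  unfolding lattice_ideal_def
proof (intro conjI allI impI)
  fix a b assume "a \<in> ?I \<and> b \<in> ?I"
  then obtain A1 A2 where "finite A1" "A1 \<subseteq> A" "a \<le> Sup A1" "finite A2" "A2 \<subseteq> A" "b \<le> Sup A2"
    by blast
  then show "sup a b \<in> ?I"
    by (intro CollectI exI[of _ "A1 \<union> A2"]) (auto simp: Sup_union_distrib intro: le_supI1 le_supI2)
qed (auto intro: order.trans exI[of _ "{}"])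

lemma lattice_filter_top: "lattice_filter F \<Longrightarrow> top \<in> F"
  unfolding lattice_filter_def by blast

lemma lattice_filter_upward: "lattice_filter F \<Longrightarrow> a \<in> F \<Longrightarrow> a \<le> b \<Longrightarrow> b \<in> F"
  unfolding lattice_filter_def by blast

lemma lattice_filter_inf: "lattice_filter F \<Longrightarrow> a \<in> F \<Longrightarrow> b \<in> F \<Longrightarrow> inf a b \<in> F"
  unfolding lattice_filter_def by blast

lemma lattice_filter_Union_chain:
  assumes "C \<noteq> {}" and filters: "\<And>F. F \<in> C \<Longrightarrow> lattice_filter F"
    and chain: "\<And>F G. F \<in> C \<Longrightarrow> G \<in> C \<Longrightarrow> F \<subseteq> G \<or> G \<subseteq> F"
  shows "lattice_filter (\<Union>C)"
  unfolding lattice_filter_def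
proof (intro conjI allI impI)
  fix a b assume "a \<in> \<Union>C \<and> b \<in> \<Union>C"
  then obtain F G where FG: "F \<in> C" "G \<in> C" "a \<in> F" "b \<in> G"
    by blast
  then consider "a \<in> G" | "b \<in> F"
    using chain by blast
  then show "inf a b \<in> \<Union>C"
    by cases (use FG filters lattice_filter_inf in blast)+
next
  show "top \<in> \<Union>C"
    using assms(1) filters lattice_filter_top by blast
qed (use filters lattice_filter_upward in blast)

lemma lattice_filter_adjoin:
  assumes "lattice_filter F"
  shows "lattice_filter {y. \<exists>f\<in>F. inf f a \<le> y}" (is "lattice_filter ?G")
  unfolding lattice_filter_def
proof (intro conjI allI impI)
  fix u v assume "u \<in> ?G \<and> v \<in> ?G"
  then obtain f g where "f \<in> F" "g \<in> F" "inf f a \<le> u" "inf g a \<le> v"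
    by blast
  moreover have "inf (inf f g) a \<le> inf u v"
    using calculation by (meson inf.bounded_iff inf_le1 inf_le2 order_trans)
  moreover have "inf f g \<in> F"
    using calculation assms unfolding lattice_filter_def by blast
  ultimately show "inf u v \<in> ?G"
    by blast
qed (use assms in \<open>auto simp: lattice_filter_def intro: order.trans\<close>)

lemma Sup_finite_chain_mem:
  fixes T :: "'a::complete_lattice set"
  assumes "finite T" "T \<noteq> {}" "\<And>a b. a \<in> T \<Longrightarrow> b \<in> T \<Longrightarrow> a \<le> b \<or> b \<le> a"
  shows "Sup T \<in> T"
proof -
  obtain m where "m \<in> T" and m: "\<And>b. b \<in> T \<Longrightarrow> m \<le> b \<Longrightarrow> m = b"
    using finite_has_maximal[OF assms(1,2)] by blast
  then have "Sup T = m"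
    using assms(3) by (metis Sup_least Sup_upper order.antisym)
  then show ?thesis
    using \<open>m \<in> T\<close> by simp
qed

lemma compact_el_not_le_Sup_chain:
  fixes k :: "'a::complete_lattice"
  assumes "compact_el k" "C \<noteq> {}" and chain: "\<And>a b. a \<in> C \<Longrightarrow> b \<in> C \<Longrightarrow> a \<le> b \<or> b \<le> a"
    and below: "\<And>c. c \<in> C \<Longrightarrow> \<not> k \<le> c"
  shows "\<not> k \<le> Sup C"
proof
  assume "k \<le> Sup C"
  then obtain T where T: "T \<subseteq> C" "finite T" "k \<le> Sup T"
    using assms(1) unfolding compact_el_def way_below_def by blast
  show False
  proof (cases "T = {}")
    case True
    obtain c where "c \<in> C"
      using assms(2) by blast
    with True T(3) below show False
      by (simp add: bot_unique)
  next
    case False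
    then have "Sup T \<in> C"
      using Sup_finite_chain_mem[of T] T(1,2) chain by blast
    with T(3) below show False
      by blast
  qed
qed

lemma compact_el_ex_maximal_not_above:
  fixes k m :: "'a::complete_lattice"
  assumes "compact_el k" "\<not> k \<le> m"
  obtains p where "m \<le> p" "\<not> k \<le> p" "\<And>q. p \<le> q \<Longrightarrow> \<not> k \<le> q \<Longrightarrow> q = p"
proof -
  define A where "A = {p. m \<le> p \<and> \<not> k \<le> p}"
  have "partial_order_on A (relation_of (\<le>) A)"
    by (rule partial_order_on_relation_ofI) auto
  then have "\<exists>p\<in>A. \<forall>q\<in>A. p \<le> q \<longrightarrow> q = p"
  proof (rule predicate_Zorn)
    fix C assume "C \<in> Chains (relation_of (\<le>) A)"
    then have CA: "C \<subseteq> A" and chain: "\<And>a b. a \<in> C \<Longrightarrow> b \<in> C \<Longrightarrow> a \<le> b \<or> b \<le> a"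
      unfolding Chains_def relation_of_def by blast+
    show "\<exists>u\<in>A. \<forall>a\<in>C. a \<le> u"
    proof (cases "C = {}")
      case True
      then show ?thesis
        using assms(2) unfolding A_def by auto
    next
      case False
      then obtain c where "c \<in> C"
        by blast
      then have "m \<le> Sup C"
        using CA unfolding A_def by (auto intro: Sup_upper2)
      moreover have "\<not> k \<le> Sup C"
        using compact_el_not_le_Sup_chain[OF assms(1) False chain] CA unfolding A_def by blast
      ultimately have "Sup C \<in> A"
        unfolding A_def by simp
      moreover have "\<forall>a\<in>C. a \<le> Sup C"
        by (simp add: Sup_upper)
      ultimately show ?thesis
        by blast
    qed
  qed
  then obtain p where "p \<in> A" and "\<And>q. q \<in> A \<Longrightarrow> p \<le> q \<Longrightarrow> q = p"
    by blast
  then show ?thesis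
    unfolding A_def by (intro that) (auto intro: order.trans)
qed

section \<open>Distributive complete lattices\<close>

locale distrib_complete_lattice =
  fixes t :: "'a::complete_lattice itself"
  assumes inf_sup_distrib: "inf (a::'a) (sup b c) = sup (inf a b) (inf a c)"
begin

lemma sup_inf_distrib: "sup (a::'a) (inf b c) = inf (sup a b) (sup a c)"
proof -
  have "inf (sup a b) (sup a c) = sup (inf (sup a b) a) (inf (sup a b) c)"
    by (rule inf_sup_distrib)
  also have "\<dots> = sup a (sup (inf c a) (inf c b))"
    using inf_sup_distrib[of c a b] by (simp add: inf.absorb2 inf_commute)
  also have "\<dots> = sup a (inf b c)"
    by (metis inf.absorb_iff2 inf_commute inf_le2 sup_absorb1 sup_assoc sup_inf_absorb)
  finally show ?thesis
    by simp
qed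

lemma maximal_filter_prime:
  assumes M: "lattice_filter M" "lattice_ideal I" "M \<inter> I = {}"
    and maximal: "\<And>F. lattice_filter F \<Longrightarrow> M \<subseteq> F \<Longrightarrow> F \<inter> I = {} \<Longrightarrow> F = M"
  shows "prime_filter (M::'a set)"
proof -
  have I_downward: "a \<in> I" if "b \<in> I" "a \<le> b" for a b
    using assms(2) that unfolding lattice_ideal_def by blast
  have extend: "\<exists>m\<in>M. inf m a \<in> I" if "a \<notin> M" for a
  proof (rule ccontr)
    assume "\<not> ?thesis"
    then have "{y. \<exists>m\<in>M. inf m a \<le> y} \<inter> I = {}"
      using I_downward by blast
    moreover have "M \<subseteq> {y. \<exists>m\<in>M. inf m a \<le> y}"
      by (auto intro: le_infI1)
    ultimately have "{y. \<exists>m\<in>M. inf m a \<le> y} = M"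
      using maximal lattice_filter_adjoin[OF M(1)] by blast
    moreover have "a \<in> {y. \<exists>m\<in>M. inf m a \<le> y}"
      using lattice_filter_top[OF M(1)] by auto
    ultimately show False
      using that by blast
  qed
  have "a \<in> M \<or> b \<in> M" if ab: "sup a b \<in> M" for a b
  proof (rule ccontr)
    assume "\<not> ?thesis"
    then obtain m1 m2 where m: "m1 \<in> M" "inf m1 a \<in> I" "m2 \<in> M" "inf m2 b \<in> I"
      using extend by blast
    have "inf (inf m1 m2) (sup a b) = sup (inf (inf m1 m2) a) (inf (inf m1 m2) b)"
      by (rule inf_sup_distrib)
    also have "\<dots> \<le> sup (inf m1 a) (inf m2 b)"
      by (intro sup_mono inf_mono) simp_all
    finally have "inf (inf m1 m2) (sup a b) \<in> I"
      using m assms(2) I_downward unfolding lattice_ideal_def by blast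
    moreover have "inf (inf m1 m2) (sup a b) \<in> M"
      using m ab lattice_filter_inf[OF M(1)] by blast
    ultimately show False
      using M(3) by blast
  qed
  moreover have "bot \<notin> M"
    using assms(2,3) unfolding lattice_ideal_def by blast
  ultimately show ?thesis
    using M(1) unfolding prime_filter_def lattice_filter_def by blast
qed

theorem prime_filter_theorem:
  assumes "\<And>C0 A0. finite C0 \<Longrightarrow> C0 \<subseteq> C \<Longrightarrow> finite A0 \<Longrightarrow> A0 \<subseteq> A \<Longrightarrow> \<not> Inf C0 \<le> Sup (A0::'a set)"
  obtains x where "prime_filter x" "C \<subseteq> x" "x \<inter> A = {}"
proof -
  define I where "I = {y. \<exists>A0. finite A0 \<and> A0 \<subseteq> A \<and> y \<le> Sup A0}"
  define FF where "FF = {F. lattice_filter F \<and> C \<subseteq> F \<and> F \<inter> I = {}}"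
  have "{y. \<exists>C0. finite C0 \<and> C0 \<subseteq> C \<and> Inf C0 \<le> y} \<in> FF"
    unfolding FF_def I_def
    using lattice_filter_generated assms by (fastforce intro: exI[of _ "{_}"] order.trans)
  then have "FF \<noteq> {}"
    by blast
  moreover have "\<Union>CC \<in> FF" if "CC \<noteq> {}" "subset.chain FF CC" for CC
    using that lattice_filter_Union_chain[of CC] unfolding FF_def subset_chain_def by blast
  ultimately obtain M where "M \<in> FF" and maximal: "\<And>F. F \<in> FF \<Longrightarrow> M \<subseteq> F \<Longrightarrow> F = M"
    using subset_Zorn_nonempty[of FF] by blast
  then have "prime_filter M"
    using lattice_ideal_generated[of A] unfolding FF_def I_def
    by (intro maximal_filter_prime[of M]) auto
  moreover have "A \<subseteq> I"
    unfolding I_def by (auto intro: exI[of _ "{_}"])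
  ultimately show ?thesis
    using \<open>M \<in> FF\<close> that unfolding FF_def by blast
qed

lemma ex_prime_filter_separating:
  assumes "\<not> (a::'a) \<le> b"
  obtains x where "prime_filter x" "a \<in> x" "b \<notin> x"
proof -
  have "\<not> Inf C0 \<le> Sup A0"
    if "finite C0" "C0 \<subseteq> {a}" "finite A0" "A0 \<subseteq> {b}" for C0 A0
  proof -
    have "a \<le> Inf C0" "Sup A0 \<le> b"
      using that by (auto intro: Inf_greatest Sup_least)
    then show ?thesis
      using assms by (meson order.trans)
  qed
  then obtain x where "prime_filter x" "{a} \<subseteq> x" "x \<inter> {b} = {}"
    by (rule prime_filter_theorem)
  then show ?thesis
    using that by blast
qed

lemma stone_map_le_iff: "stone_map a \<subseteq> stone_map b \<longleftrightarrow> (a::'a) \<le> b"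
  using ex_prime_filter_separating prime_filter_upward by (metis mem_stone_map subset_iff)

lemma ex_finite_Inf_le_Sup:
  assumes "\<And>x. prime_filter x \<Longrightarrow> (\<exists>a\<in>A. a \<in> x) \<or> (\<exists>c\<in>D. c \<notin> x)"
  obtains A0 D0 where "finite A0" "A0 \<subseteq> A" "finite D0" "D0 \<subseteq> D" "Inf D0 \<le> Sup (A0::'a set)"
proof -
  have "\<exists>A0 D0. finite A0 \<and> A0 \<subseteq> A \<and> finite D0 \<and> D0 \<subseteq> D \<and> Inf D0 \<le> Sup A0"
  proof (rule ccontr)
    assume "\<not> ?thesis"
    then have "\<not> Inf D0 \<le> Sup A0"
      if "finite D0" "D0 \<subseteq> D" "finite A0" "A0 \<subseteq> A" for D0 A0
      using that by blast
    then obtain x where "prime_filter x" "D \<subseteq> x" "x \<inter> A = {}"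
      by (rule prime_filter_theorem)
    with assms show False
      by blast
  qed
  with that show ?thesis
    by blast
qed

theorem compact_space_XL_topology: "compact_space (XL_topology t)"
proof (rule Alexander_subbase_alt[OF _ _ XL_topology_eq_subbase[symmetric]])
  let ?P = "{x::'a set. prime_filter x}"
  let ?B = "range stone_map \<union> range (\<lambda>a. ?P - stone_map a)"
  show "?P \<subseteq> \<Union>?B"
    using stone_map_top by blast
  fix \<C> assume \<C>: "\<C> \<subseteq> ?B" "?P \<subseteq> \<Union>\<C>"
  define A where "A = {a. stone_map a \<in> \<C>}"
  define D where "D = {c. ?P - stone_map c \<in> \<C>}"
  have "(\<exists>a\<in>A. a \<in> x) \<or> (\<exists>c\<in>D. c \<notin> x)" if x: "prime_filter x" for x
  proof -
    obtain S where S: "S \<in> \<C>" "x \<in> S"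
      using \<C>(2) x by blast
    with \<C>(1) consider a where "S = stone_map a" | c where "S = ?P - stone_map c"
      by blast
    then show ?thesis
      using S unfolding A_def D_def by cases auto
  qed
  then obtain A0 D0 where A0: "finite A0" "A0 \<subseteq> A" and D0: "finite D0" "D0 \<subseteq> D"
    and le: "Inf D0 \<le> Sup A0"
    by (rule ex_finite_Inf_le_Sup)
  show "\<exists>\<C>'. finite \<C>' \<and> \<C>' \<subseteq> \<C> \<and> ?P \<subseteq> \<Union>\<C>'"
  proof (intro exI conjI)
    show "finite (stone_map ` A0 \<union> (\<lambda>c. ?P - stone_map c) ` D0)"
      using A0 D0 by simp
    show "stone_map ` A0 \<union> (\<lambda>c. ?P - stone_map c) ` D0 \<subseteq> \<C>"
      using A0 D0 unfolding A_def D_def by blast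
    show "?P \<subseteq> \<Union>(stone_map ` A0 \<union> (\<lambda>c. ?P - stone_map c) ` D0)"
    proof
      fix x assume x: "x \<in> ?P"
      show "x \<in> \<Union>(stone_map ` A0 \<union> (\<lambda>c. ?P - stone_map c) ` D0)"
      proof (cases "D0 \<subseteq> x")
        case True
        then have "Sup A0 \<in> x"
          using x le D0(1) prime_filter_Inf_finite_iff prime_filter_upward by blast
        then obtain a where "a \<in> A0" "a \<in> x"
          using x A0(1) prime_filter_Sup_finite_iff by blast
        with x show ?thesis
          by auto
      next
        case False
        with x show ?thesis
          by auto
      qed
    qed
  qed
qed

lemma open_upset_eq_Union_stone_map:
  assumes U: "openin (XL_topology t) U" "is_upset (XL_topology t) (\<subseteq>) U"
  shows "U = \<Union>(stone_map ` {a::'a. stone_map a \<subseteq> U})"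
proof (intro equalityI subsetI)
  fix x assume "x \<in> U"
  let ?K = "topspace (XL_topology t) - U"
  have "compactin (XL_topology t) ?K"
    by (intro closedin_compact_space compact_space_XL_topology closedin_diff closedin_topspace U(1))
  moreover have "?K \<subseteq> (\<Union>a\<in>x. {x. prime_filter x} - stone_map a)"
  proof
    fix y assume "y \<in> ?K"
    then have "prime_filter y" "\<not> x \<subseteq> y"
      using U(2) \<open>x \<in> U\<close> unfolding is_upset_def by auto
    then show "y \<in> (\<Union>a\<in>x. {x. prime_filter x} - stone_map a)"
      by auto
  qed
  ultimately obtain F where F: "finite F" "F \<subseteq> x" and K: "?K \<subseteq> (\<Union>a\<in>F. {x. prime_filter x} - stone_map a)"
    using clopenin_compl_stone_map unfolding clopenin_def by (metis compactin_finite_subcover_image)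
  have "prime_filter x"
    using U(1) \<open>x \<in> U\<close> openin_subset by fastforce
  then have "x \<in> stone_map (Inf F)"
    using F prime_filter_Inf_finite_iff by auto
  moreover have "stone_map (Inf F) \<subseteq> U"
    using K F(1) prime_filter_Inf_finite_iff by fastforce
  ultimately show "x \<in> \<Union>(stone_map ` {a. stone_map a \<subseteq> U})"
    by blast
qed blast

theorem ClopUp_XL_topology: "ClopUp (XL_topology t) (\<subseteq>) = range (stone_map :: 'a \<Rightarrow> _)"
proof (intro equalityI subsetI)
  fix U assume "U \<in> ClopUp (XL_topology t) (\<subseteq>)"
  then have U: "clopenin (XL_topology t) U" "is_upset (XL_topology t) (\<subseteq>) U"
    unfolding ClopUp_def by blast+
  then have "compactin (XL_topology t) U"
    unfolding clopenin_def using closedin_compact_space compact_space_XL_topology by blast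
  moreover have "U \<subseteq> (\<Union>a\<in>{a::'a. stone_map a \<subseteq> U}. stone_map a)"
    using U open_upset_eq_Union_stone_map unfolding clopenin_def by blast
  ultimately obtain A where A: "finite A" "A \<subseteq> {a. stone_map a \<subseteq> U}" "U \<subseteq> (\<Union>a\<in>A. stone_map a)"
    using clopenin_stone_map unfolding clopenin_def by (metis compactin_finite_subcover_image)
  have "U = stone_map (Sup A)"
  proof
    show "U \<subseteq> stone_map (Sup A)"
    proof
      fix x assume "x \<in> U"
      then obtain a where "a \<in> A" "prime_filter x" "a \<in> x"
        using A(3) by auto
      then show "x \<in> stone_map (Sup A)"
        by (auto intro: prime_filter_upward Sup_upper)
    qed
    show "stone_map (Sup A) \<subseteq> U"
      using A(1,2) prime_filter_Sup_finite_iff by fastforce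
  qed
  then show "U \<in> range stone_map"
    by blast
qed (auto simp: ClopUp_def clopenin_stone_map is_upset_stone_map)

lemma spatial_part_XL_topology_iff:
  "y \<in> spatial_part (XL_topology t) (\<subseteq>) \<longleftrightarrow> prime_filter y \<and> (\<exists>p::'a. y = {a. \<not> a \<le> p})"
proof
  assume "y \<in> spatial_part (XL_topology t) (\<subseteq>)"
  then have y: "prime_filter y" and "clopenin (XL_topology t) {z. prime_filter z \<and> z \<subseteq> y}"
    unfolding spatial_part_def down_set_singleton_XL_topology by auto
  then have "clopenin (XL_topology t) ({x. prime_filter x} - {z. prime_filter z \<and> z \<subseteq> y})"
    unfolding clopenin_def using closedin_diff openin_diff closedin_topspace openin_topspace
    by (metis topspace_XL_topology)
  moreover have "is_upset (XL_topology t) (\<subseteq>) ({x. prime_filter x} - {z. prime_filter z \<and> z \<subseteq> y})"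
    unfolding is_upset_def by auto
  ultimately obtain p where p: "{x. prime_filter x} - {z. prime_filter z \<and> z \<subseteq> y} = stone_map p"
    using ClopUp_XL_topology unfolding ClopUp_def by blast
  have "y = {a. \<not> a \<le> p}"
  proof (intro equalityI subsetI CollectI)
    fix a assume "a \<in> y"
    show "\<not> a \<le> p"
    proof
      assume "a \<le> p"
      then have "y \<in> stone_map p"
        using y \<open>a \<in> y\<close> prime_filter_upward by auto
      with p show False
        by blast
    qed
  next
    fix a assume "a \<in> {a. \<not> a \<le> p}"
    then have "\<not> a \<le> p"
      by simp
    then obtain z where z: "prime_filter z" "a \<in> z" "p \<notin> z"
      by (rule ex_prime_filter_separating)
    then have "z \<notin> {x. prime_filter x} - {z. prime_filter z \<and> z \<subseteq> y}"
      unfolding p by simp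
    with z show "a \<in> y"
      by auto
  qed
  with y show "prime_filter y \<and> (\<exists>p::'a. y = {a. \<not> a \<le> p})"
    by blast
next
  assume "prime_filter y \<and> (\<exists>p::'a. y = {a. \<not> a \<le> p})"
  then obtain p :: 'a where y: "prime_filter y" "y = {a. \<not> a \<le> p}"
    by blast
  have "{z. prime_filter z \<and> z \<subseteq> y} = {x. prime_filter x} - stone_map p"
    using y prime_filter_upward by fastforce
  then show "y \<in> spatial_part (XL_topology t) (\<subseteq>)"
    unfolding spatial_part_def down_set_singleton_XL_topology
    using y(1) clopenin_compl_stone_map by auto
qed

lemma prime_filter_compl_maximal_not_above:
  assumes "\<not> k \<le> p" and maximal: "\<And>q. p \<le> q \<Longrightarrow> \<not> k \<le> q \<Longrightarrow> q = p"
  shows "prime_filter {a::'a. \<not> a \<le> p}"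
proof -
  have above: "k \<le> sup p a" if "\<not> a \<le> p" for a
    using maximal[of "sup p a"] that by (metis sup.cobounded1 sup.cobounded2)
  have "a \<le> p \<or> b \<le> p" if "inf a b \<le> p" for a b
  proof (rule ccontr)
    assume "\<not> ?thesis"
    then have "k \<le> inf (sup p a) (sup p b)"
      using above by simp
    also have "\<dots> = p"
      using that by (simp add: sup_inf_distrib[symmetric] sup.absorb1)
    finally show False
      using assms(1) by contradiction
  qed
  then show ?thesis
    using assms(1) unfolding prime_filter_def by (auto simp: top_unique intro: order.trans)
qed

lemma compact_min_set_stone_map_spatial:
  assumes "compact_el (k::'a)"
  shows "min_set (\<subseteq>) (stone_map k) \<subseteq> spatial_part (XL_topology t) (\<subseteq>)"
proof
  fix x assume "x \<in> min_set (\<subseteq>) (stone_map k)"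
  then have x: "prime_filter x" "k \<in> x" and min: "\<And>y. prime_filter y \<Longrightarrow> k \<in> y \<Longrightarrow> y \<subseteq> x \<Longrightarrow> y = x"
    unfolding min_set_def by auto
  define m where "m = Sup {a. a \<notin> x}"
  have "\<not> k \<le> m"
  proof
    assume "k \<le> m"
    then obtain T where T: "T \<subseteq> {a. a \<notin> x}" "finite T" "k \<le> Sup T"
      using assms unfolding compact_el_def way_below_def m_def by blast
    then have "Sup T \<in> x"
      using x prime_filter_upward by blast
    then show False
      using T x prime_filter_Sup_finite_iff by blast
  qed
  then obtain p where p: "m \<le> p" "\<not> k \<le> p" "\<And>q. p \<le> q \<Longrightarrow> \<not> k \<le> q \<Longrightarrow> q = p"
    using compact_el_ex_maximal_not_above assms by blast
  have "{a. \<not> a \<le> p} \<subseteq> x"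
  proof
    fix a assume "a \<in> {a. \<not> a \<le> p}"
    moreover have "a \<le> p" if "a \<notin> x"
    proof -
      have "a \<le> m"
        using that unfolding m_def by (simp add: Sup_upper)
      then show ?thesis
        using p(1) by (rule order.trans)
    qed
    ultimately show "a \<in> x"
      by blast
  qed
  then have "x = {a. \<not> a \<le> p}"
    using min prime_filter_compl_maximal_not_above[of k p] p by blast
  then show "x \<in> spatial_part (XL_topology t) (\<subseteq>)"
    using x spatial_part_XL_topology_iff by blast
qed

lemma compact_el_if_scott_upset_stone_map:
  assumes "scott_upset (XL_topology t) (\<subseteq>) (stone_map (k::'a))"
  shows "compact_el k"
  unfolding compact_el_def way_below_def
proof (intro allI impI)
  fix S assume "k \<le> Sup S"
  have "(\<exists>s\<in>S. s \<in> x) \<or> (\<exists>c\<in>{k}. c \<notin> x)" if x: "prime_filter x" for x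
  proof (rule ccontr)
    assume "\<not> ?thesis"
    then have "k \<in> x" "x \<inter> S = {}"
      by auto
    then obtain m where m: "m \<in> min_set (\<subseteq>) (stone_map k)" "m \<subseteq> x"
      using x ex_min_set_stone_map_below by blast
    then obtain p where p: "m = {a. \<not> a \<le> p}"
      using assms spatial_part_XL_topology_iff unfolding scott_upset_def by blast
    have "Sup S \<le> p"
      using m(2) \<open>x \<inter> S = {}\<close> p by (auto intro: Sup_least)
    moreover have "\<not> k \<le> p"
      using m(1) p unfolding min_set_def by auto
    ultimately show False
      using \<open>k \<le> Sup S\<close> by (meson order.trans)
  qed
  then obtain A0 D0 where "finite A0" "A0 \<subseteq> S" "D0 \<subseteq> {k}" "Inf D0 \<le> Sup A0"
    by (rule ex_finite_Inf_le_Sup)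
  moreover have "k \<le> Inf D0"
    using \<open>D0 \<subseteq> {k}\<close> by (auto intro: Inf_greatest)
  ultimately show "\<exists>T. T \<subseteq> S \<and> finite T \<and> k \<le> Sup T"
    by (meson order.trans)
qed

lemma scott_upset_stone_map_iff:
  "scott_upset (XL_topology t) (\<subseteq>) (stone_map (k::'a)) \<longleftrightarrow> compact_el k"
  using compact_el_if_scott_upset_stone_map compact_min_set_stone_map_spatial
    clopenin_stone_map is_upset_stone_map
  unfolding scott_upset_def clopenin_def by blast

theorem ClopSUp_XL_topology: "ClopSUp (XL_topology t) (\<subseteq>) = stone_map ` K_el t"
proof (intro equalityI subsetI)
  fix V assume "V \<in> ClopSUp (XL_topology t) (\<subseteq>)"
  then have V: "V \<in> ClopUp (XL_topology t) (\<subseteq>)" "scott_upset (XL_topology t) (\<subseteq>) V"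
    unfolding ClopSUp_def ClopUp_def scott_upset_def by blast+
  then obtain k :: 'a where "V = stone_map k"
    using ClopUp_XL_topology by blast
  with V(2) show "V \<in> stone_map ` K_el t"
    unfolding K_el_def using scott_upset_stone_map_iff by auto
next
  fix V assume "V \<in> stone_map ` K_el t"
  then show "V \<in> ClopSUp (XL_topology t) (\<subseteq>)"
    unfolding ClopSUp_def K_el_def using clopenin_stone_map scott_upset_stone_map_iff by auto
qed

theorem priestley_space_XL_topology:
  "priestley_space (XL_topology t) (\<subseteq>)"
  unfolding priestley_space_def stone_space_def
proof (intro conjI allI impI ballI)
  fix U x assume "openin (XL_topology t) U \<and> x \<in> U"
  then obtain b c :: 'a where "x \<in> stone_map b - stone_map c" "stone_map b - stone_map c \<subseteq> U"
    unfolding openin_XL_topology_iff by blast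
  then show "\<exists>V. clopenin (XL_topology t) V \<and> x \<in> V \<and> V \<subseteq> U"
    using clopenin_stone_map_diff by blast
next
  fix x y assume "x \<in> topspace (XL_topology t)" "\<not> x \<subseteq> y"
  then obtain a :: 'a where "prime_filter x" "a \<in> x" "a \<notin> y"
    by auto
  then have "x \<in> stone_map a" "y \<notin> stone_map a"
    by simp_all
  then show "\<exists>U. clopenin (XL_topology t) U \<and> is_upset (XL_topology t) (\<subseteq>) U \<and> x \<in> U \<and> y \<notin> U"
    using clopenin_stone_map is_upset_stone_map by blast
qed (auto simp: compact_space_XL_topology Hausdorff_space_XL_topology partial_order_on_space_def)

end

section \<open>Frames\<close>

locale frame =
  fixes t :: "'a::complete_lattice itself"
  assumes is_frame: "is_frame t"
begin

lemma inf_Sup_distrib: "inf (a::'a) (Sup S) = (SUP s\<in>S. inf a s)"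
  using is_frame unfolding is_frame_def by blast

end

sublocale frame \<subseteq> distrib_complete_lattice
proof
  fix a b c :: 'a
  show "inf a (sup b c) = sup (inf a b) (inf a c)"
    using inf_Sup_distrib[of a "{b, c}"] by simp
qed

definition heyting_imp :: "'a::complete_lattice \<Rightarrow> 'a \<Rightarrow> 'a" where
  "heyting_imp b c = Sup {d. inf d b \<le> c}"

lemma le_heyting_imp: "inf d b \<le> c \<Longrightarrow> d \<le> heyting_imp b c"
  unfolding heyting_imp_def by (rule Sup_upper) simp

lemma down_set_UN: "down_set X le (\<Union>i\<in>I. f i) = (\<Union>i\<in>I. down_set X le (f i))"
  unfolding down_set_def by blast

context frame
begin

lemma inf_heyting_imp_le: "inf b (heyting_imp b c) \<le> (c::'a)"
proof -
  have "inf b (heyting_imp b c) = (SUP d\<in>{d. inf d b \<le> c}. inf b d)"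
    unfolding heyting_imp_def by (rule inf_Sup_distrib)
  also have "\<dots> \<le> c"
    by (rule SUP_least) (simp add: inf_commute)
  finally show ?thesis .
qed

lemma closure_of_Union_stone_map:
  "XL_topology t closure_of (\<Union>(stone_map ` S)) = stone_map (Sup (S::'a set))"
proof
  have "\<Union>(stone_map ` S) \<subseteq> stone_map (Sup S)"
  proof
    fix x assume "x \<in> \<Union>(stone_map ` S)"
    then obtain s where "s \<in> S" "prime_filter x" "s \<in> x"
      by auto
    then show "x \<in> stone_map (Sup S)"
      using prime_filter_upward[of x s "Sup S"] Sup_upper[of s S] by simp
  qed
  then show "XL_topology t closure_of (\<Union>(stone_map ` S)) \<subseteq> stone_map (Sup S)"
    by (rule closure_of_minimal) (use clopenin_stone_map[of t "Sup S"] in \<open>simp add: clopenin_def\<close>)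
next
  show "stone_map (Sup S) \<subseteq> XL_topology t closure_of (\<Union>(stone_map ` S))"
  proof
    fix x assume x: "x \<in> stone_map (Sup S)"
    show "x \<in> XL_topology t closure_of (\<Union>(stone_map ` S))"
      unfolding in_closure_of
    proof (intro conjI allI impI)
      show "x \<in> topspace (XL_topology t)"
        using x by simp
      fix T assume "x \<in> T \<and> openin (XL_topology t) T"
      then obtain b c where bc: "x \<in> stone_map b - stone_map c" "stone_map b - stone_map c \<subseteq> T"
        unfolding openin_XL_topology_iff by blast
      have "inf b (Sup S) \<in> x" "c \<notin> x"
        using x bc(1) prime_filter_inf_iff by auto
      then have "\<not> (SUP s\<in>S. inf b s) \<le> c"
        using x prime_filter_upward unfolding inf_Sup_distrib by auto
      then obtain s where "s \<in> S" "\<not> inf b s \<le> c"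
        by (meson SUP_least)
      from this(2) obtain y where y: "prime_filter y" "inf b s \<in> y" "c \<notin> y"
        by (rule ex_prime_filter_separating)
      then have "y \<in> stone_map s" "y \<in> stone_map b - stone_map c"
        using prime_filter_inf_iff by auto
      then show "\<exists>y. y \<in> \<Union>(stone_map ` S) \<and> y \<in> T"
        using bc(2) \<open>s \<in> S\<close> by blast
    qed
  qed
qed

lemma ex_prime_filter_extending:
  assumes z: "prime_filter z" "heyting_imp b c \<notin> z"
  obtains y where "prime_filter y" "z \<subseteq> y" "b \<in> y" "(c::'a) \<notin> y"
proof -
  have "\<not> Inf C0 \<le> Sup A0" if "finite C0" "C0 \<subseteq> insert b z" "finite A0" "A0 \<subseteq> {c}" for C0 A0
  proof
    assume "Inf C0 \<le> Sup A0"
    moreover have "Sup A0 \<le> c"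
      using that(4) by (auto intro: Sup_least)
    moreover have "inf (Inf (C0 - {b})) b \<le> Inf C0"
    proof (rule Inf_greatest)
      fix e assume "e \<in> C0"
      then show "inf (Inf (C0 - {b})) b \<le> e"
        by (cases "e = b") (auto intro: le_infI1 Inf_lower)
    qed
    ultimately have "Inf (C0 - {b}) \<le> heyting_imp b c"
      by (metis le_heyting_imp order.trans)
    moreover have "Inf (C0 - {b}) \<in> z"
      using that(1,2) by (subst prime_filter_Inf_finite_iff[OF z(1)]) auto
    ultimately show False
      using z prime_filter_upward by blast
  qed
  then obtain y where "prime_filter y" "insert b z \<subseteq> y" "y \<inter> {c} = {}"
    by (rule prime_filter_theorem)
  with that show ?thesis
    by blast
qed

lemma down_set_stone_map_diff:
  "down_set (XL_topology t) (\<subseteq>) (stone_map b - stone_map c)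
     = {x. prime_filter x} - stone_map (heyting_imp b (c::'a))"
proof (intro equalityI subsetI)
  fix z assume "z \<in> down_set (XL_topology t) (\<subseteq>) (stone_map b - stone_map c)"
  then obtain y where z: "prime_filter z" "z \<subseteq> y" and y: "prime_filter y" "b \<in> y" "c \<notin> y"
    unfolding down_set_def by auto
  have "heyting_imp b c \<notin> z"
  proof
    assume "heyting_imp b c \<in> z"
    then have "inf b (heyting_imp b c) \<in> y"
      using z(2) y prime_filter_inf_iff by blast
    then have "c \<in> y"
      using inf_heyting_imp_le y(1) prime_filter_upward by blast
    with y(3) show False
      by contradiction
  qed
  with z(1) show "z \<in> {x. prime_filter x} - stone_map (heyting_imp b c)"
    by simp
next
  fix z assume "z \<in> {x. prime_filter x} - stone_map (heyting_imp b c)"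
  then have z: "prime_filter z" "heyting_imp b c \<notin> z"
    by auto
  then obtain y where "prime_filter y" "z \<subseteq> y" "b \<in> y" "c \<notin> y"
    by (rule ex_prime_filter_extending)
  with z(1) show "z \<in> down_set (XL_topology t) (\<subseteq>) (stone_map b - stone_map c)"
    unfolding down_set_def by auto
qed

lemma clopenin_down_set_XL_topology:
  assumes "clopenin (XL_topology t) U"
  shows "clopenin (XL_topology t) (down_set (XL_topology t) (\<subseteq>) U)"
proof -
  let ?f = "\<lambda>(b, c). stone_map b - stone_map (c::'a)"
  have "compactin (XL_topology t) U"
    using assms closedin_compact_space compact_space_XL_topology unfolding clopenin_def by blast
  moreover have "U \<subseteq> (\<Union>i\<in>{i. ?f i \<subseteq> U}. ?f i)"
  proof
    fix x assume "x \<in> U"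
    then obtain b c where "x \<in> stone_map b - stone_map c" "stone_map b - stone_map c \<subseteq> U"
      using assms unfolding clopenin_def openin_XL_topology_iff by blast
    then show "x \<in> (\<Union>i\<in>{i. ?f i \<subseteq> U}. ?f i)"
      by (intro UN_I[of "(b, c)"]) auto
  qed
  ultimately obtain J where J: "finite J" "J \<subseteq> {i. ?f i \<subseteq> U}" "U \<subseteq> (\<Union>i\<in>J. ?f i)"
    by (rule compactin_finite_subcover_image) (auto simp: openin_stone_map_diff)
  then have U: "U = (\<Union>i\<in>J. ?f i)"
    by blast
  have "down_set (XL_topology t) (\<subseteq>) U = (\<Union>(b, c)\<in>J. {x. prime_filter x} - stone_map (heyting_imp b c))"
    unfolding U down_set_UN by (simp add: case_prod_beta down_set_stone_map_diff)
  then show ?thesis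
    using J(1) clopenin_compl_stone_map unfolding clopenin_def
    by (auto intro!: openin_Union closedin_Union)
qed

lemma openin_closure_of_open_upset:
  assumes "openin (XL_topology t) U" "is_upset (XL_topology t) (\<subseteq>) U"
  shows "openin (XL_topology t) (XL_topology t closure_of U)"
proof -
  have "XL_topology t closure_of U = stone_map (Sup {a::'a. stone_map a \<subseteq> U})"
    using open_upset_eq_Union_stone_map[OF assms] closure_of_Union_stone_map by metis
  moreover have "openin (XL_topology t) (stone_map (Sup {a::'a. stone_map a \<subseteq> U}))"
    using clopenin_stone_map unfolding clopenin_def by blast
  ultimately show ?thesis
    by simp
qed

theorem L_space_XL_topology: "L_space (XL_topology t) (\<subseteq>)"
  unfolding L_space_def
  using priestley_space_XL_topology clopenin_down_set_XL_topology openin_closure_of_open_upset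
  by blast

lemma core_stone_map: "core (XL_topology t) (\<subseteq>) (stone_map a) = \<Union>(stone_map ` {b \<in> K_el t. b \<le> (a::'a)})"
  unfolding core_def ClopSUp_XL_topology using stone_map_le_iff by blast

theorem dense_core_stone_map_iff:
  "dense_in_set (XL_topology t) (core (XL_topology t) (\<subseteq>) (stone_map a)) (stone_map a)
     \<longleftrightarrow> a = Sup {b \<in> K_el t. b \<le> (a::'a)}"
proof -
  let ?K = "{b \<in> K_el t. b \<le> a}"
  have "\<Union>(stone_map ` ?K) \<subseteq> stone_map a"
    using stone_map_le_iff by blast
  then have "dense_in_set (XL_topology t) (core (XL_topology t) (\<subseteq>) (stone_map a)) (stone_map a)
             \<longleftrightarrow> stone_map a \<subseteq> stone_map (Sup ?K)"
    unfolding dense_in_set_def core_stone_map closure_of_Union_stone_map by blast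
  also have "\<dots> \<longleftrightarrow> a \<le> Sup ?K"
    by (rule stone_map_le_iff)
  also have "\<dots> \<longleftrightarrow> a = Sup ?K"
    using Sup_least[of ?K a] by (auto intro: order.antisym)
  finally show ?thesis .
qed

end

theorem theorem4p4:
  fixes t :: "'a::complete_lattice itself"
  assumes frame: "is_frame t"
  shows "(\<forall>a::'a. a = Sup {b \<in> K_el t. b \<le> a}
            \<longleftrightarrow> dense_in_set (XL_topology t) (core (XL_topology t) (\<subseteq>) (stone_map a)) (stone_map a))
         \<and> (algebraic_frame t \<longleftrightarrow> algebraic_L_space (XL_topology t) (\<subseteq>))"
proof -
  interpret frame t
    by (rule frame.intro) (rule frame)
  have pointwise: "\<forall>a::'a. a = Sup {b \<in> K_el t. b \<le> a}
            \<longleftrightarrow> dense_in_set (XL_topology t) (core (XL_topology t) (\<subseteq>) (stone_map a)) (stone_map a)"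
    using dense_core_stone_map_iff by blast
  moreover have "algebraic_frame t \<longleftrightarrow> algebraic_L_space (XL_topology t) (\<subseteq>)"
    unfolding algebraic_frame_def algebraic_L_space_def ClopUp_XL_topology
    using frame L_space_XL_topology pointwise by blast
  ultimately show ?thesis
    by blast
qed

end
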